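(* Let $G$ be a rooted graph. For any integers $k,g\ge 0$ and $m,h\ge 1$, \begin{align*} X_{S_h^{gk}(G,\,K_m)}&=(m-1)!\Bigg(\sum_{z=0}^{m-1}e_z\,X_{G^{g+h+k+m-z-1}}-\sum_{z=1}^{m-1}\frac{X_{K_z^h}}{(z-1)!}\,X_{G^{g+k+m-z-1}}\Bigg)\\ &\qquad+\sum_{z=0}^{k-1}\Big(X_{K_m^{z}}\,X_{G^{g+h+k-z-1}}-X_{K_m^{h+z}}\,X_{G^{g+k-z-1}}\Big). \end{align*}
   Context: All graphs are finite simple graphs. The chromatic symmetric function of a graph $G$ is $X_G=\sum_{\kappa}\prod_{v\in V(G)}x_{\kappa(v)}$, where $\kappa$ ranges over proper colorings $\kappa:V(G)\to\{1,2,\dots\}$; $e_z$ is the $z$-th elementary symmetric function, $e_0=1$. For a rooted graph $G$ and $t\ge0$, $G^t$ is $G$ with a pendant path of length $t$ attached at its root; $K_s^t$ is the lollipop ($K_s$ with a pendant path of length $t$ at one vertex). $S_h^{gk}(G,K_m)$ is the graph obtained by taking a center vertex $c$ and three paths from $c$, disjoint except at $c$, of lengths $g$, $k$, $h$, identifying the far end of the first path (or $c$ if $g=0$) with the root of $G$, identifying the far end of the second path (or $c$ if $k=0$) with a vertex of a disjoint complete graph $K_m$, and leaving the third path as a pendant path ending at a leaf. *)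

theory Defs
  imports Complex_Main "HOL-Library.FuncSet"
begin

type_synonym 'a graph = "'a set \<times> 'a set set"

definition simple_graph :: "'a graph \<Rightarrow> bool" where
  "simple_graph G \<longleftrightarrow> finite (fst G) \<and> (\<forall>e\<in>snd G. e \<subseteq> fst G \<and> card e = 2)"

definition proper_coloring :: "'a graph \<Rightarrow> ('a \<Rightarrow> nat) \<Rightarrow> bool" where
  "proper_coloring G \<kappa> \<longleftrightarrow> (\<forall>e\<in>snd G. \<forall>u\<in>e. \<forall>v\<in>e. u \<noteq> v \<longrightarrow> \<kappa> u \<noteq> \<kappa> v)"

text \<open>Chromatic symmetric function specialised to the n variables x 0, ..., x (n-1)
  (colours 0..n-1): sum over proper colourings of the product of x (colour v).\<close>
definition csf :: "'a graph \<Rightarrow> nat \<Rightarrow> (nat \<Rightarrow> real) \<Rightarrow> real" where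
  "csf G n x = (\<Sum>\<kappa>\<in>{\<kappa>\<in>fst G \<rightarrow>\<^sub>E {..<n}. proper_coloring G \<kappa>}. \<Prod>v\<in>fst G. x (\<kappa> v))"

definition esym :: "nat \<Rightarrow> nat \<Rightarrow> (nat \<Rightarrow> real) \<Rightarrow> real" where
  "esym n z x = (\<Sum>S\<in>{S. S \<subseteq> {..<n} \<and> card S = z}. \<Prod>i\<in>S. x i)"

text \<open>G^t: attach a pendant path of length t at the root r. Path vertices are
  Inl r (position 0) and Inr i for 1 \<le> i \<le> t.\<close>
definition pvert :: "'a \<Rightarrow> nat \<Rightarrow> 'a + nat" where
  "pvert r i = (if i = 0 then Inl r else Inr i)"

definition pend :: "'a graph \<Rightarrow> 'a \<Rightarrow> nat \<Rightarrow> ('a + nat) graph" where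
  "pend G r t = (Inl ` fst G \<union> Inr ` {1..t},
     (image Inl) ` snd G \<union> {{pvert r i, pvert r (Suc i)} | i. i < t})"

definition complete :: "nat \<Rightarrow> nat graph" where
  "complete s = ({..<s}, {{i, j} | i j. i < s \<and> j < s \<and> i \<noteq> j})"

definition lollipop :: "nat \<Rightarrow> nat \<Rightarrow> (nat + nat) graph" where
  "lollipop s t = pend (complete s) 0 t"

text \<open>The graph S_h^{gk}(G, K_m). Centre vertex cen; first path A 0 = cen, ..., A g = root of G;
  second path B 0 = cen, ..., B k = vertex 0 of K_m; third (pendant) path C 0 = cen, ..., C h.\<close>
definition s_cen :: "'a \<Rightarrow> nat \<Rightarrow> nat \<Rightarrow> 'a + (nat + nat \<times> nat)" where
  "s_cen r g k = (if g = 0 then Inl r else if k = 0 then Inr (Inl 0) else Inr (Inr (0, 0)))"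

definition s_A :: "'a \<Rightarrow> nat \<Rightarrow> nat \<Rightarrow> nat \<Rightarrow> 'a + (nat + nat \<times> nat)" where
  "s_A r g k i = (if i = 0 then s_cen r g k else if i = g then Inl r else Inr (Inr (1, i)))"

definition s_B :: "'a \<Rightarrow> nat \<Rightarrow> nat \<Rightarrow> nat \<Rightarrow> 'a + (nat + nat \<times> nat)" where
  "s_B r g k i = (if i = 0 then s_cen r g k else if i = k then Inr (Inl 0) else Inr (Inr (2, i)))"

definition s_C :: "'a \<Rightarrow> nat \<Rightarrow> nat \<Rightarrow> nat \<Rightarrow> 'a + (nat + nat \<times> nat)" where
  "s_C r g k i = (if i = 0 then s_cen r g k else Inr (Inr (3, i)))"

definition s_K :: "'a \<Rightarrow> nat \<Rightarrow> nat \<Rightarrow> nat \<Rightarrow> 'a + (nat + nat \<times> nat)" where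
  "s_K r g k i = (if i = 0 then s_B r g k k else Inr (Inl i))"

definition spider :: "'a graph \<Rightarrow> 'a \<Rightarrow> nat \<Rightarrow> nat \<Rightarrow> nat \<Rightarrow> nat \<Rightarrow> ('a + (nat + nat \<times> nat)) graph" where
  "spider G r h g k m =
    (Inl ` fst G \<union> s_K r g k ` {..<m} \<union> s_A r g k ` {0..g} \<union> s_B r g k ` {0..k} \<union> s_C r g k ` {0..h},
     (image Inl) ` snd G
     \<union> {{s_K r g k i, s_K r g k j} | i j. i < m \<and> j < m \<and> i \<noteq> j}
     \<union> {{s_A r g k i, s_A r g k (Suc i)} | i. i < g}
     \<union> {{s_B r g k i, s_B r g k (Suc i)} | i. i < k}
     \<union> {{s_C r g k i, s_C r g k (Suc i)} | i. i < h})"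

end

theory Submission
  imports Defs
begin

(* For a graph H rooted at v let W_H(d) be the sum, over proper colourings with v coloured d, of
   the product of x over the other vertices; then X_H = <1, W_H> for the form
   <u, w> = sum_d x_d u(d) w(d).  Gluing graphs at their roots multiplies these vectors pointwise,
   and attaching a pendant edge at the root applies T w (d) = <1, w> - x_d w(d), which is
   self-adjoint for the form.  A clique gives W_{K_m}(d) = (m-1)! e_{m-1}(x without x_d).
   Since S_h^{gk}(G, K_m) is G^g, a path of length h and K_m^k glued at the centre,
   X_S = <T^g W_G, T^h 1 . T^k W_{K_m}>.  Both T^(j+1) W and e_{j+1}(x without x_d) have the shape
   a - x_d f(d), and u (a - x f) = T (u f) + a u - <u, f>; peeling off the k factors of T and
   then the m - 1 levels of e_{m-1} this way, and moving every T across the form, leaves only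
   products X_{K_z^t} X_{G^s}. *)

section \<open>A weighted inner product and the pendant-edge operator\<close>

definition wdot :: "nat \<Rightarrow> (nat \<Rightarrow> real) \<Rightarrow> (nat \<Rightarrow> real) \<Rightarrow> (nat \<Rightarrow> real) \<Rightarrow> real" where
  "wdot n x u w = (\<Sum>d<n. x d * u d * w d)"

definition leaf_step :: "nat \<Rightarrow> (nat \<Rightarrow> real) \<Rightarrow> (nat \<Rightarrow> real) \<Rightarrow> nat \<Rightarrow> real" where
  "leaf_step n x w d = wdot n x (\<lambda>_. 1) w - x d * w d"

lemma wdot_commute: "wdot n x u w = wdot n x w u"
  unfolding wdot_def by (simp add: mult_ac)

lemma wdot_one_mult: "wdot n x (\<lambda>_. 1) (\<lambda>d. u d * w d) = wdot n x u w"
  unfolding wdot_def by (simp add: mult_ac)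

lemma wdot_cong: "(\<And>d. d < n \<Longrightarrow> w d = w' d) \<Longrightarrow> wdot n x u w = wdot n x u w'"
  unfolding wdot_def by simp

lemma wdot_scale: "wdot n x u (\<lambda>d. a * w d) = a * wdot n x u w"
  unfolding wdot_def by (simp add: sum_distrib_left mult_ac)

lemma wdot_affine:
  "wdot n x u (\<lambda>d. v d + a * w d - b) = wdot n x u v + a * wdot n x u w - b * wdot n x u (\<lambda>_. 1)"
  unfolding wdot_def by (simp add: algebra_simps sum.distrib sum_subtractf sum_distrib_left)

(* Colour vectors are only compared at colours d < n: rooted_csf vanishes beyond n, leaf_step
   does not. *)
lemma leaf_step_cong:
  assumes "\<And>c. c < n \<Longrightarrow> w c = w' c" and "d < n"
  shows "leaf_step n x w d = leaf_step n x w' d"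
  unfolding leaf_step_def using wdot_cong[of n w w' x "\<lambda>_. 1", OF assms(1)] assms by simp

lemma leaf_step_pow_cong:
  assumes "\<And>c. c < n \<Longrightarrow> w c = w' c" and "d < n"
  shows "(leaf_step n x ^^ t) w d = (leaf_step n x ^^ t) w' d"
  using assms(2)
proof (induction t arbitrary: d)
  case (Suc t)
  show ?case
    unfolding funpow.simps o_apply using Suc.IH Suc.prems by (rule leaf_step_cong)
qed (use assms(1) in simp)

lemma leaf_step_scale: "leaf_step n x (\<lambda>d. a * w d) = (\<lambda>d. a * leaf_step n x w d)"
  unfolding leaf_step_def wdot_scale by (simp add: fun_eq_iff right_diff_distrib)

lemma leaf_step_pow_scale: "(leaf_step n x ^^ t) (\<lambda>d. a * w d) = (\<lambda>d. a * (leaf_step n x ^^ t) w d)"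
  by (induction t) (simp_all add: leaf_step_scale)

lemma wdot_leaf_step: "wdot n x u (leaf_step n x w) = wdot n x (leaf_step n x u) w"
proof -
  have expand: "wdot n x u (leaf_step n x w) =
      wdot n x (\<lambda>_. 1) u * wdot n x (\<lambda>_. 1) w - (\<Sum>d<n. x d * x d * u d * w d)" for u w
    unfolding leaf_step_def wdot_def sum_product
    by (simp add: right_diff_distrib sum_subtractf sum_distrib_left mult_ac)
  have "wdot n x (leaf_step n x u) w = wdot n x w (leaf_step n x u)"
    by (rule wdot_commute)
  then show ?thesis
    using expand[of u w] expand[of w u] by (simp add: wdot_commute[of n x "\<lambda>_. 1"] mult_ac)
qed

lemma wdot_leaf_step_pow: "wdot n x u ((leaf_step n x ^^ t) w) = wdot n x ((leaf_step n x ^^ t) u) w"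
proof (induction t arbitrary: u)
  case (Suc t)
  have "wdot n x u ((leaf_step n x ^^ Suc t) w) = wdot n x (leaf_step n x u) ((leaf_step n x ^^ t) w)"
    by (simp add: wdot_leaf_step)
  also have "\<dots> = wdot n x ((leaf_step n x ^^ Suc t) u) w"
    by (simp add: Suc.IH funpow_Suc_right del: funpow.simps)
  finally show ?case .
qed simp

lemma wdot_leaf_step_pow_one:
  "wdot n x ((leaf_step n x ^^ a) u) ((leaf_step n x ^^ b) (\<lambda>_. 1)) = wdot n x (\<lambda>_. 1) ((leaf_step n x ^^ (a + b)) u)"
proof -
  have "(leaf_step n x ^^ b) ((leaf_step n x ^^ a) u) = (leaf_step n x ^^ (a + b)) u"
    by (simp add: funpow_add add.commute[of a b])
  then show ?thesis
    by (simp only: wdot_leaf_step_pow[of n x "(leaf_step n x ^^ a) u"] wdot_commute[of n x _ "\<lambda>_. 1"])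
qed

(* Induction on the pointwise identity u (a - x f) = T (u f) + a u - <u, f>, moving T across
   the form. *)
lemma wdot_mult_recurrence:
  assumes rec: "\<And>j d. d < n \<Longrightarrow> f (Suc j) d = a j - x d * f j d"
  shows "wdot n x w (\<lambda>d. u d * f j d) =
    wdot n x ((leaf_step n x ^^ j) w) (\<lambda>d. u d * f 0 d)
    + (\<Sum>z<j. a z * wdot n x ((leaf_step n x ^^ (j - 1 - z)) w) u
              - wdot n x u (f z) * wdot n x ((leaf_step n x ^^ (j - 1 - z)) w) (\<lambda>_. 1))"
proof (induction j arbitrary: w)
  case 0
  then show ?case by simp
next
  case (Suc j)
  let ?T = "leaf_step n x"
  have step: "u d * f (Suc j) d = ?T (\<lambda>d. u d * f j d) d + a j * u d - wdot n x u (f j)"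
    if "d < n" for d
    using that by (simp add: rec leaf_step_def wdot_one_mult right_diff_distrib)
  have shift: "(?T ^^ (j - 1 - z)) (?T w) = (?T ^^ (Suc j - 1 - z)) w" if "z < j" for z
  proof -
    have "Suc j - 1 - z = Suc (j - 1 - z)" using that by simp
    then show ?thesis by (simp only: funpow_Suc_right o_apply)
  qed
  have "wdot n x w (\<lambda>d. u d * f (Suc j) d) =
      wdot n x (?T w) (\<lambda>d. u d * f j d) + a j * wdot n x w u - wdot n x u (f j) * wdot n x w (\<lambda>_. 1)"
    by (simp only: wdot_cong[of n _ _ x w, OF step] wdot_affine wdot_leaf_step)
  also have "wdot n x (?T w) (\<lambda>d. u d * f j d) =
      wdot n x ((?T ^^ Suc j) w) (\<lambda>d. u d * f 0 d)
      + (\<Sum>z<j. a z * wdot n x ((?T ^^ (Suc j - 1 - z)) w) u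
              - wdot n x u (f z) * wdot n x ((?T ^^ (Suc j - 1 - z)) w) (\<lambda>_. 1))"
    unfolding Suc.IH funpow_Suc_right o_apply using shift by (intro arg_cong2[where f = "(+)"] refl sum.cong) simp_all
  finally show ?case
    by (simp only: sum.lessThan_Suc diff_self_eq_0 funpow_0 add_diff_cancel_left' Suc_diff_1) simp
qed

section \<open>Colour-resolved chromatic weights of rooted graphs\<close>

definition rooted_csf :: "'v graph \<Rightarrow> 'v \<Rightarrow> nat \<Rightarrow> (nat \<Rightarrow> real) \<Rightarrow> nat \<Rightarrow> real" where
  "rooted_csf H v n x d =
    (\<Sum>\<kappa>\<in>{\<kappa> \<in> fst H \<rightarrow>\<^sub>E {..<n}. proper_coloring H \<kappa> \<and> \<kappa> v = d}. \<Prod>u\<in>fst H - {v}. x (\<kappa> u))"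

lemma finite_colorings:
  fixes n :: nat
  shows "finite V \<Longrightarrow> finite {\<kappa> \<in> V \<rightarrow>\<^sub>E {..<n}. P \<kappa>}"
  by (rule finite_subset[OF _ finite_PiE[of V "\<lambda>_. {..<n}"]]) auto

lemma proper_coloring_cong:
  assumes "\<forall>e\<in>E. e \<subseteq> V" and "\<And>u. u \<in> V \<Longrightarrow> \<kappa> u = \<kappa>' u"
  shows "proper_coloring (V, E) \<kappa> \<longleftrightarrow> proper_coloring (V, E) \<kappa>'"
  using assms unfolding proper_coloring_def by (metis snd_conv subsetD)

lemma sum_colorings_root_fixed:
  assumes "finite (fst H)" and "v \<in> fst H"
  shows "(\<Sum>\<kappa>\<in>{\<kappa> \<in> fst H \<rightarrow>\<^sub>E {..<n}. proper_coloring H \<kappa> \<and> \<kappa> v = d}. \<Prod>u\<in>fst H. x (\<kappa> u))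
    = x d * rooted_csf H v n x d"
  unfolding rooted_csf_def sum_distrib_left using assms by (intro sum.cong refl) (simp add: prod.remove)

lemma csf_eq_sum_rooted_csf:
  assumes "finite (fst H)" and "v \<in> fst H"
  shows "csf H n x = (\<Sum>d<n. x d * rooted_csf H v n x d)"
proof -
  let ?S = "{\<kappa> \<in> fst H \<rightarrow>\<^sub>E {..<n}. proper_coloring H \<kappa>}"
  have "(\<lambda>\<kappa>. \<kappa> v) ` ?S \<subseteq> {..<n}"
    using assms(2) by auto
  then have "csf H n x = (\<Sum>d<n. \<Sum>\<kappa>\<in>{\<kappa> \<in> ?S. \<kappa> v = d}. \<Prod>u\<in>fst H. x (\<kappa> u))"
    unfolding csf_def by (subst sum.group) (auto intro: finite_colorings assms(1))
  then show ?thesis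
    using sum_colorings_root_fixed[OF assms, where n = n and x = x] by (simp add: conj_assoc)
qed

lemma csf_eq_wdot_rooted_csf:
  assumes "finite (fst H)" and "v \<in> fst H" and "\<And>d. d < n \<Longrightarrow> rooted_csf H v n x d = w d"
  shows "csf H n x = wdot n x (\<lambda>_. 1) w"
  using assms by (simp add: csf_eq_sum_rooted_csf wdot_def)

lemma rooted_csf_add_leaf:
  assumes finV: "finite V" and vV: "v \<in> V" and wV: "w \<notin> V" and EV: "\<forall>e\<in>E. e \<subseteq> V"
    and dn: "d < n"
  shows "rooted_csf (insert w V, insert {v, w} E) w n x d = leaf_step n x (rooted_csf (V, E) v n x) d"
proof -
  let ?S = "{\<kappa> \<in> V \<rightarrow>\<^sub>E {..<n}. proper_coloring (V, E) \<kappa>}"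
  let ?S' = "{\<kappa> \<in> insert w V \<rightarrow>\<^sub>E {..<n}. proper_coloring (insert w V, insert {v, w} E) \<kappa> \<and> \<kappa> w = d}"
  have extend: "proper_coloring (insert w V, insert {v, w} E) \<kappa> \<longleftrightarrow> proper_coloring (V, E) \<kappa> \<and> \<kappa> v \<noteq> \<kappa> w"
    for \<kappa>
    using vV wV unfolding proper_coloring_def by auto
  have "rooted_csf (insert w V, insert {v, w} E) w n x d = (\<Sum>\<kappa>\<in>?S - {\<kappa> \<in> ?S. \<kappa> v = d}. \<Prod>u\<in>V. x (\<kappa> u))"
    unfolding rooted_csf_def fst_conv
  proof (rule sum.reindex_bij_witness[where j = "\<lambda>\<kappa>. restrict \<kappa> V" and i = "\<lambda>\<kappa>. \<kappa>(w := d)"])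
    fix \<kappa> assume \<kappa>: "\<kappa> \<in> ?S'"
    show "(restrict \<kappa> V)(w := d) = \<kappa>"
      using \<kappa> wV by (auto simp: PiE_def extensional_def fun_eq_iff)
    have "proper_coloring (V, E) (restrict \<kappa> V)"
      using \<kappa> extend proper_coloring_cong[OF EV, of "restrict \<kappa> V" \<kappa>] by auto
    then show "restrict \<kappa> V \<in> ?S - {\<kappa> \<in> ?S. \<kappa> v = d}"
      using \<kappa> vV extend by (auto simp: PiE_def extensional_def)
    show "(\<Prod>u\<in>V. x (restrict \<kappa> V u)) = (\<Prod>u\<in>insert w V - {w}. x (\<kappa> u))"
      using wV by (auto intro: prod.cong)
  next
    fix \<kappa> assume \<kappa>: "\<kappa> \<in> ?S - {\<kappa> \<in> ?S. \<kappa> v = d}"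
    show "restrict (\<kappa>(w := d)) V = \<kappa>"
      using \<kappa> wV by (auto simp: PiE_def extensional_def fun_eq_iff)
    have "proper_coloring (V, E) (\<kappa>(w := d)) \<longleftrightarrow> proper_coloring (V, E) \<kappa>"
      by (rule proper_coloring_cong[OF EV]) (use wV in auto)
    then have "proper_coloring (V, E) (\<kappa>(w := d))"
      using \<kappa> by simp
    then show "\<kappa>(w := d) \<in> ?S'"
      using \<kappa> vV wV dn extend by (auto simp: PiE_def extensional_def)
  qed
  also have "\<dots> = (\<Sum>\<kappa>\<in>?S. \<Prod>u\<in>V. x (\<kappa> u)) - (\<Sum>\<kappa>\<in>{\<kappa> \<in> ?S. \<kappa> v = d}. \<Prod>u\<in>V. x (\<kappa> u))"
    by (rule sum_diff) (auto intro: finite_colorings finV)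
  also have "\<dots> = leaf_step n x (rooted_csf (V, E) v n x) d"
    using csf_eq_sum_rooted_csf[of "(V, E)" v n x] sum_colorings_root_fixed[of "(V, E)" v, where n = n and d = d and x = x] finV vV
    by (simp add: csf_def leaf_step_def wdot_def conj_assoc)
  finally show ?thesis .
qed

lemma bij_betw_join_colorings:
  assumes cut: "V1 \<inter> V2 = {v}" and E1: "\<forall>e\<in>E1. e \<subseteq> V1" and E2: "\<forall>e\<in>E2. e \<subseteq> V2"
  shows "bij_betw (\<lambda>(\<kappa>1, \<kappa>2) u. if u \<in> V1 then \<kappa>1 u else \<kappa>2 u)
    ({\<kappa> \<in> V1 \<rightarrow>\<^sub>E C. proper_coloring (V1, E1) \<kappa> \<and> \<kappa> v = d}
      \<times> {\<kappa> \<in> V2 \<rightarrow>\<^sub>E C. proper_coloring (V2, E2) \<kappa> \<and> \<kappa> v = d})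
    {\<kappa> \<in> V1 \<union> V2 \<rightarrow>\<^sub>E C. proper_coloring (V1 \<union> V2, E1 \<union> E2) \<kappa> \<and> \<kappa> v = d}"
  (is "bij_betw ?join (?S1 \<times> ?S2) ?S")
proof (rule bij_betw_byWitness[where f' = "\<lambda>\<kappa>. (restrict \<kappa> V1, restrict \<kappa> V2)"])
  have union: "proper_coloring (V1 \<union> V2, E1 \<union> E2) \<kappa> \<longleftrightarrow> proper_coloring (V1, E1) \<kappa> \<and> proper_coloring (V2, E2) \<kappa>"
    for \<kappa>
    unfolding proper_coloring_def by auto
  have agree: "\<kappa>1 u = \<kappa>2 u" if "\<kappa>1 \<in> ?S1" "\<kappa>2 \<in> ?S2" "u \<in> V1" "u \<in> V2" for \<kappa>1 \<kappa>2 u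
  proof -
    have "u = v" using that cut by blast
    then show ?thesis using that by simp
  qed
  show "\<forall>p\<in>?S1 \<times> ?S2. (restrict (?join p) V1, restrict (?join p) V2) = p"
    using agree by (auto simp: PiE_def extensional_def fun_eq_iff)
  show "\<forall>\<kappa>\<in>?S. ?join (restrict \<kappa> V1, restrict \<kappa> V2) = \<kappa>"
    by (auto simp: PiE_def extensional_def fun_eq_iff)
  show "?join ` (?S1 \<times> ?S2) \<subseteq> ?S"
  proof (rule image_subsetI)
    fix p assume "p \<in> ?S1 \<times> ?S2"
    then obtain \<kappa>1 \<kappa>2 where p: "p = (\<kappa>1, \<kappa>2)" and \<kappa>: "\<kappa>1 \<in> ?S1" "\<kappa>2 \<in> ?S2"
      by blast
    have "proper_coloring (V1, E1) (?join p)" "proper_coloring (V2, E2) (?join p)"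
      using \<kappa> agree[OF \<kappa>] proper_coloring_cong[OF E1, of "?join p" \<kappa>1]
        proper_coloring_cong[OF E2, of "?join p" \<kappa>2]
      by (auto simp: p)
    then show "?join p \<in> ?S"
      using \<kappa> cut union by (auto simp: p PiE_def extensional_def)
  qed
  show "(\<lambda>\<kappa>. (restrict \<kappa> V1, restrict \<kappa> V2)) ` ?S \<subseteq> ?S1 \<times> ?S2"
  proof (rule image_subsetI)
    fix \<kappa> assume \<kappa>: "\<kappa> \<in> ?S"
    have "proper_coloring (V1, E1) (restrict \<kappa> V1)" "proper_coloring (V2, E2) (restrict \<kappa> V2)"
      using \<kappa> union proper_coloring_cong[OF E1, of "restrict \<kappa> V1" \<kappa>]
        proper_coloring_cong[OF E2, of "restrict \<kappa> V2" \<kappa>]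
      by auto
    then show "(restrict \<kappa> V1, restrict \<kappa> V2) \<in> ?S1 \<times> ?S2"
      using \<kappa> cut by auto
  qed
qed

lemma rooted_csf_glue:
  assumes fin1: "finite V1" and fin2: "finite V2" and cut: "V1 \<inter> V2 = {v}"
    and E1: "\<forall>e\<in>E1. e \<subseteq> V1" and E2: "\<forall>e\<in>E2. e \<subseteq> V2"
  shows "rooted_csf (V1 \<union> V2, E1 \<union> E2) v n x d = rooted_csf (V1, E1) v n x d * rooted_csf (V2, E2) v n x d"
proof -
  let ?S1 = "{\<kappa> \<in> V1 \<rightarrow>\<^sub>E {..<n}. proper_coloring (V1, E1) \<kappa> \<and> \<kappa> v = d}"
  let ?S2 = "{\<kappa> \<in> V2 \<rightarrow>\<^sub>E {..<n}. proper_coloring (V2, E2) \<kappa> \<and> \<kappa> v = d}"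
  let ?join = "\<lambda>(\<kappa>1, \<kappa>2) u. if u \<in> V1 then \<kappa>1 u else \<kappa>2 u"
  have parts: "V1 \<union> V2 - {v} = (V1 - {v}) \<union> (V2 - {v})" "(V1 - {v}) \<inter> (V2 - {v}) = {}"
    and V2_only: "u \<in> V2 - {v} \<Longrightarrow> u \<notin> V1" for u
    using cut by auto
  have "rooted_csf (V1, E1) v n x d * rooted_csf (V2, E2) v n x d
      = (\<Sum>(\<kappa>1, \<kappa>2)\<in>?S1 \<times> ?S2. (\<Prod>u\<in>V1 - {v}. x (\<kappa>1 u)) * (\<Prod>u\<in>V2 - {v}. x (\<kappa>2 u)))"
    unfolding rooted_csf_def by (simp add: sum_product sum.cartesian_product)
  also have "\<dots> = (\<Sum>p\<in>?S1 \<times> ?S2. \<Prod>u\<in>V1 \<union> V2 - {v}. x (?join p u))"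
    unfolding parts(1) using fin1 fin2 parts(2) V2_only
    by (intro sum.cong refl) (auto simp: prod.union_disjoint intro!: arg_cong2[where f = "(*)"] prod.cong)
  also have "\<dots> = rooted_csf (V1 \<union> V2, E1 \<union> E2) v n x d"
    unfolding rooted_csf_def fst_conv
    using sum.reindex_bij_betw[OF bij_betw_join_colorings[OF cut E1 E2], of "\<lambda>\<kappa>. \<Prod>u\<in>V1 \<union> V2 - {v}. x (\<kappa> u)"]
    by simp
  finally show ?thesis ..
qed

lemma rooted_csf_image:
  assumes inj: "inj_on f V" and EV: "\<forall>e\<in>E. e \<subseteq> V" and vV: "v \<in> V"
  shows "rooted_csf (f ` V, image f ` E) (f v) n x d = rooted_csf (V, E) v n x d"
  unfolding rooted_csf_def fst_conv
proof (rule sum.reindex_bij_witness[where j = "\<lambda>\<kappa>. restrict (\<kappa> \<circ> f) V" and i = "\<lambda>\<kappa>. restrict (\<kappa> \<circ> inv_into V f) (f ` V)"])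
  fix \<kappa> assume \<kappa>: "\<kappa> \<in> {\<kappa> \<in> f ` V \<rightarrow>\<^sub>E {..<n}. proper_coloring (f ` V, image f ` E) \<kappa> \<and> \<kappa> (f v) = d}"
  show "restrict (restrict (\<kappa> \<circ> f) V \<circ> inv_into V f) (f ` V) = \<kappa>"
    using \<kappa> inj by (auto simp: PiE_def extensional_def fun_eq_iff inv_into_into)
  have "proper_coloring (V, E) (restrict (\<kappa> \<circ> f) V)"
    using \<kappa> EV inj unfolding proper_coloring_def by (auto simp: subset_iff) (metis inj_on_def)
  then show "restrict (\<kappa> \<circ> f) V \<in> {\<kappa> \<in> V \<rightarrow>\<^sub>E {..<n}. proper_coloring (V, E) \<kappa> \<and> \<kappa> v = d}"
    using \<kappa> vV by (auto simp: PiE_def Pi_def extensional_def)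
  have "f ` V - {f v} = f ` (V - {v})"
    using inj vV by (auto simp: inj_on_def)
  then show "(\<Prod>u\<in>V - {v}. x (restrict (\<kappa> \<circ> f) V u)) = (\<Prod>u\<in>f ` V - {f v}. x (\<kappa> u))"
    using inj by (simp add: prod.reindex inj_on_diff)
next
  fix \<kappa> assume \<kappa>: "\<kappa> \<in> {\<kappa> \<in> V \<rightarrow>\<^sub>E {..<n}. proper_coloring (V, E) \<kappa> \<and> \<kappa> v = d}"
  show "restrict (restrict (\<kappa> \<circ> inv_into V f) (f ` V) \<circ> f) V = \<kappa>"
    using \<kappa> inj by (auto simp: PiE_def extensional_def fun_eq_iff)
  have "proper_coloring (f ` V, image f ` E) (restrict (\<kappa> \<circ> inv_into V f) (f ` V))"
    using \<kappa> inj EV unfolding proper_coloring_def by (auto simp: subset_iff) (metis inj_on_def)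
  then show "restrict (\<kappa> \<circ> inv_into V f) (f ` V) \<in> {\<kappa> \<in> f ` V \<rightarrow>\<^sub>E {..<n}. proper_coloring (f ` V, image f ` E) \<kappa> \<and> \<kappa> (f v) = d}"
    using \<kappa> inj vV by (auto simp: PiE_def Pi_def extensional_def inv_into_into)
qed

lemma rooted_csf_singleton: "d < n \<Longrightarrow> rooted_csf ({v}, {}) v n x d = 1"
proof -
  assume "d < n"
  then have "{\<kappa> \<in> {v} \<rightarrow>\<^sub>E {..<n}. proper_coloring ({v}, {}) \<kappa> \<and> \<kappa> v = d} = {(\<lambda>_. undefined)(v := d)}"
    by (auto simp: proper_coloring_def PiE_def extensional_def fun_eq_iff)
  then show ?thesis
    unfolding rooted_csf_def by simp
qed

section \<open>Attaching paths\<close>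

definition path_edges :: "(nat \<Rightarrow> 'v) \<Rightarrow> nat \<Rightarrow> 'v set set" where
  "path_edges p t = {{p i, p (Suc i)} | i. i < t}"

lemma path_edges_Suc: "path_edges p (Suc t) = insert {p t, p (Suc t)} (path_edges p t)"
  unfolding path_edges_def by (auto simp: less_Suc_eq)

lemma path_edges_subset: "e \<in> path_edges p t \<Longrightarrow> e \<subseteq> p ` {0..t}"
  unfolding path_edges_def by auto

lemma path_edges_reverse: "path_edges (\<lambda>i. p (t - i)) t = path_edges p t"
proof (intro set_eqI iffI)
  fix e assume "e \<in> path_edges (\<lambda>i. p (t - i)) t"
  then obtain i where "i < t" "e = {p (t - i), p (t - Suc i)}"
    by (auto simp: path_edges_def)
  then have "t - Suc i < t" "e = {p (t - Suc i), p (Suc (t - Suc i))}"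
    by (auto simp: Suc_diff_Suc)
  then show "e \<in> path_edges p t"
    unfolding path_edges_def by blast
next
  fix e assume "e \<in> path_edges p t"
  then obtain j where "j < t" "e = {p j, p (Suc j)}"
    by (auto simp: path_edges_def)
  then have "t - Suc j < t" "e = {p (t - (t - Suc j)), p (t - Suc (t - Suc j))}"
    by (auto simp: Suc_diff_Suc insert_commute)
  then show "e \<in> path_edges (\<lambda>i. p (t - i)) t"
    unfolding path_edges_def by blast
qed

lemma path_end_fresh:
  assumes inj: "inj_on p {0..Suc t}" and new: "p ` {1..Suc t} \<inter> V = {}"
  shows "p (Suc t) \<notin> V \<union> p ` {1..t}"
proof
  assume "p (Suc t) \<in> V \<union> p ` {1..t}"
  moreover have "p (Suc t) \<notin> V"
    using new by (auto simp: disjoint_iff)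
  ultimately obtain i where i: "i \<in> {1..t}" "p (Suc t) = p i"
    by auto
  then have "Suc t = i"
    by (intro inj_onD[OF inj]) auto
  with i show False
    by simp
qed

lemma rooted_csf_attach_path:
  assumes finV: "finite V" and EV: "\<forall>e\<in>E. e \<subseteq> V" and p0: "p 0 \<in> V"
    and inj: "inj_on p {0..t}" and new: "p ` {1..t} \<inter> V = {}" and dn: "d < n"
  shows "rooted_csf (V \<union> p ` {1..t}, E \<union> path_edges p t) (p t) n x d
    = (leaf_step n x ^^ t) (rooted_csf (V, E) (p 0) n x) d"
  using inj new dn
proof (induction t arbitrary: d)
  case 0
  then show ?case by (simp add: path_edges_def)
next
  case (Suc t)
  let ?V = "V \<union> p ` {1..t}" and ?E = "E \<union> path_edges p t"
  have inj': "inj_on p {0..t}"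
    using Suc.prems(1) by (rule inj_on_subset) auto
  have "p ` {1..t} \<subseteq> p ` {1..Suc t}"
    by auto
  then have new': "p ` {1..t} \<inter> V = {}"
    using Suc.prems(2) by blast
  have pV: "p ` {0..t} \<subseteq> ?V"
  proof
    fix y assume "y \<in> p ` {0..t}"
    then obtain i where "i \<le> t" "y = p i" by auto
    then show "y \<in> ?V" using p0 by (cases i) auto
  qed
  have "p (Suc t) \<notin> ?V"
    using Suc.prems(1,2) by (rule path_end_fresh)
  moreover have "\<forall>e\<in>?E. e \<subseteq> ?V"
  proof
    fix e assume "e \<in> ?E"
    then show "e \<subseteq> ?V"
      using EV order_trans[OF path_edges_subset pV] by blast
  qed
  moreover have "p t \<in> ?V"
    using pV by (meson atLeastAtMost_iff image_subset_iff order_refl zero_le)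
  ultimately have "rooted_csf (insert (p (Suc t)) ?V, insert {p t, p (Suc t)} ?E) (p (Suc t)) n x d
      = leaf_step n x (rooted_csf (?V, ?E) (p t) n x) d"
    using finV Suc.prems(3) by (intro rooted_csf_add_leaf) auto
  also have "\<dots> = (leaf_step n x ^^ Suc t) (rooted_csf (V, E) (p 0) n x) d"
    unfolding funpow.simps o_apply using Suc.IH[OF inj' new'] Suc.prems(3) by (rule leaf_step_cong)
  finally show ?case
    by (simp add: path_edges_Suc atLeastAtMostSuc_conv insert_commute)
qed

lemma rooted_csf_attach_path_rev:
  assumes finV: "finite V" and EV: "\<forall>e\<in>E. e \<subseteq> V" and qt: "q t \<in> V"
    and inj: "inj_on q {0..t}" and new: "q ` {0..<t} \<inter> V = {}" and dn: "d < n"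
  shows "rooted_csf (V \<union> q ` {0..t}, E \<union> path_edges q t) (q 0) n x d
    = (leaf_step n x ^^ t) (rooted_csf (V, E) (q t) n x) d"
proof -
  let ?p = "\<lambda>i. q (t - i)"
  have img: "?p ` {1..t} = q ` {0..<t}"
  proof (intro set_eqI iffI)
    fix y assume "y \<in> q ` {0..<t}"
    then obtain j where "j < t" "y = q (t - (t - j))" by auto
    then show "y \<in> ?p ` {1..t}" by (intro image_eqI[where x = "t - j"]) auto
  qed auto
  have "V \<union> q ` {0..t} = V \<union> ?p ` {1..t}"
    using qt unfolding img by (auto simp: atLeastLessThanSuc_atLeastAtMost[symmetric] atLeastLessThanSuc)
  moreover have "inj_on ?p {0..t}"
  proof (rule inj_onI)
    fix a b assume "a \<in> {0..t}" "b \<in> {0..t}" "q (t - a) = q (t - b)"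
    moreover from this have "t - a = t - b"
      using inj by (auto dest: inj_onD)
    ultimately show "a = b" by auto
  qed
  ultimately show ?thesis
    using rooted_csf_attach_path[of V E ?p t d n x] assms img
    by (simp add: path_edges_reverse)
qed

section \<open>Elementary symmetric functions and cliques\<close>

definition esym_on :: "(nat \<Rightarrow> real) \<Rightarrow> nat \<Rightarrow> nat set \<Rightarrow> real" where
  "esym_on x j B = (\<Sum>S\<in>{S. S \<subseteq> B \<and> card S = j}. \<Prod>i\<in>S. x i)"

lemma esym_eq_esym_on: "esym n j x = esym_on x j {..<n}"
  unfolding esym_def esym_on_def by simp

lemma finite_subsets_of_card: "finite B \<Longrightarrow> finite {S. S \<subseteq> B \<and> card S = j}"
  by (rule finite_subset[of _ "Pow B"]) auto

lemma esym_on_0: "finite B \<Longrightarrow> esym_on x 0 B = 1"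
proof -
  assume "finite B"
  then have "{S. S \<subseteq> B \<and> card S = 0} = {{}}"
    by (auto dest: finite_subset)
  then show ?thesis
    unfolding esym_on_def by simp
qed

lemma esym_on_remove:
  assumes fin: "finite B" and dB: "d \<in> B"
  shows "esym_on x (Suc j) B = esym_on x (Suc j) (B - {d}) + x d * esym_on x j (B - {d})"
proof -
  let ?F = "\<lambda>B j. {S. S \<subseteq> B \<and> card S = j}"
  have card_insert_d: "card (insert d S) = Suc (card S)" if "S \<subseteq> B - {d}" for S
    using that fin by (subst card_insert_disjoint) (auto dest: finite_subset)
  have subsets_split: "?F B (Suc j) = ?F (B - {d}) (Suc j) \<union> insert d ` ?F (B - {d}) j"
  proof (intro set_eqI iffI)
    fix S assume S: "S \<in> ?F B (Suc j)"
    show "S \<in> ?F (B - {d}) (Suc j) \<union> insert d ` ?F (B - {d}) j"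
    proof (cases "d \<in> S")
      case True
      have "finite S" using S fin by (auto dest: finite_subset)
      then have "S - {d} \<in> ?F (B - {d}) j" "S = insert d (S - {d})"
        using S True by auto
      then show ?thesis by blast
    qed (use S in auto)
  qed (use dB card_insert_d in auto)
  have "inj_on (insert d) (?F (B - {d}) j)"
    by (rule inj_onI) (metis Diff_insert_absorb mem_Collect_eq subset_Diff_insert)
  moreover have "prod x (insert d S) = x d * prod x S" if "S \<subseteq> B - {d}" for S
    using that fin by (subst prod.insert) (auto dest: finite_subset)
  ultimately have "(\<Sum>S\<in>insert d ` ?F (B - {d}) j. \<Prod>i\<in>S. x i) = (\<Sum>S\<in>?F (B - {d}) j. x d * (\<Prod>i\<in>S. x i))"
    by (simp add: sum.reindex)
  moreover have "esym_on x (Suc j) B = esym_on x (Suc j) (B - {d}) + (\<Sum>S\<in>insert d ` ?F (B - {d}) j. \<Prod>i\<in>S. x i)"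
    unfolding esym_on_def subsets_split using fin by (subst sum.union_disjoint) (auto simp: finite_subsets_of_card)
  ultimately show ?thesis
    unfolding esym_on_def sum_distrib_left by simp
qed

(* Each (j + 1)-subset S of B arises j + 1 times, as insert c T with c in S and T = S - {c}. *)
lemma sum_mult_esym_on_remove:
  assumes fin: "finite B"
  shows "(\<Sum>c\<in>B. x c * esym_on x j (B - {c})) = real (Suc j) * esym_on x (Suc j) B"
proof -
  let ?F = "\<lambda>B j. {S. S \<subseteq> B \<and> card S = j}"
  have "x c * prod x S = prod x (insert c S)" if "S \<subseteq> B - {c}" for c S
    using that fin by (subst prod.insert) (auto dest: finite_subset)
  then have "(\<Sum>c\<in>B. x c * esym_on x j (B - {c})) = (\<Sum>(c, S)\<in>Sigma B (\<lambda>c. ?F (B - {c}) j). \<Prod>i\<in>insert c S. x i)"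
    unfolding esym_on_def sum_distrib_left using fin
    by (subst sum.Sigma) (auto simp: finite_subsets_of_card intro!: sum.cong)
  also have "\<dots> = (\<Sum>(S, c)\<in>Sigma (?F B (Suc j)) (\<lambda>S. S). \<Prod>i\<in>S. x i)"
  proof (rule sum.reindex_bij_witness[where j = "\<lambda>(c, S). (insert c S, c)" and i = "\<lambda>(S, c). (c, S - {c})"])
    fix p assume p: "p \<in> Sigma B (\<lambda>c. ?F (B - {c}) j)"
    then have "finite (snd p)"
      using fin by (auto dest: finite_subset)
    then show "(\<lambda>(c, S). (insert c S, c)) p \<in> Sigma (?F B (Suc j)) (\<lambda>S. S)"
      using p by (auto simp: card_insert_if)
  next
    fix p assume p: "p \<in> Sigma (?F B (Suc j)) (\<lambda>S. S)"
    then have "finite (fst p)"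
      using fin by (auto dest: finite_subset)
    then show "(\<lambda>(S, c). (c, S - {c})) p \<in> Sigma B (\<lambda>c. ?F (B - {c}) j)"
      using p by auto
  qed auto
  also have "\<dots> = (\<Sum>S\<in>?F B (Suc j). real (Suc j) * (\<Prod>i\<in>S. x i))"
    using fin by (subst sum.Sigma[symmetric]) (auto simp: finite_subsets_of_card dest: finite_subset)
  finally show ?thesis
    unfolding esym_on_def sum_distrib_left .
qed

lemma sum_injections_insert:
  fixes x :: "'b \<Rightarrow> real"
  assumes "a \<notin> D" and "finite D" and "finite B"
  shows "(\<Sum>\<kappa>\<in>{\<kappa> \<in> insert a D \<rightarrow>\<^sub>E B. inj_on \<kappa> (insert a D)}. \<Prod>u\<in>insert a D. x (\<kappa> u))
    = (\<Sum>c\<in>B. x c * (\<Sum>\<kappa>\<in>{\<kappa> \<in> D \<rightarrow>\<^sub>E B - {c}. inj_on \<kappa> D}. \<Prod>u\<in>D. x (\<kappa> u)))"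
proof -
  let ?I = "\<lambda>D B. {\<kappa> \<in> D \<rightarrow>\<^sub>E B. inj_on \<kappa> D}"
  have "(\<Sum>\<kappa>\<in>?I (insert a D) B. \<Prod>u\<in>insert a D. x (\<kappa> u))
      = (\<Sum>(c, \<kappa>)\<in>Sigma B (\<lambda>c. ?I D (B - {c})). x c * (\<Prod>u\<in>D. x (\<kappa> u)))"
  proof (rule sum.reindex_bij_witness[where j = "\<lambda>\<kappa>. (\<kappa> a, restrict \<kappa> D)" and i = "\<lambda>(c, \<kappa>). \<kappa>(a := c)"])
    fix \<kappa> assume \<kappa>: "\<kappa> \<in> ?I (insert a D) B"
    show "(\<lambda>(c, \<kappa>). \<kappa>(a := c)) (\<kappa> a, restrict \<kappa> D) = \<kappa>"
      using \<kappa> assms(1) by (auto simp: PiE_def extensional_def fun_eq_iff)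
    show "(\<kappa> a, restrict \<kappa> D) \<in> Sigma B (\<lambda>c. ?I D (B - {c}))"
      using \<kappa> assms(1) by (auto simp: PiE_def extensional_def inj_on_def)
    show "(\<lambda>(c, \<kappa>). x c * (\<Prod>u\<in>D. x (\<kappa> u))) (\<kappa> a, restrict \<kappa> D) = (\<Prod>u\<in>insert a D. x (\<kappa> u))"
      using assms(1,2) by simp
  next
    fix p assume "p \<in> Sigma B (\<lambda>c. ?I D (B - {c}))"
    then obtain c \<kappa> where p: "p = (c, \<kappa>)" "c \<in> B" "\<kappa> \<in> ?I D (B - {c})"
      by auto
    show "(\<lambda>\<kappa>. (\<kappa> a, restrict \<kappa> D)) ((\<lambda>(c, \<kappa>). \<kappa>(a := c)) p) = p"
      using p assms(1) by (auto simp: PiE_def extensional_def fun_eq_iff)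
    show "(\<lambda>(c, \<kappa>). \<kappa>(a := c)) p \<in> ?I (insert a D) B"
      using p assms(1) by (auto simp: PiE_def extensional_def inj_on_def)
  qed
  also have "\<dots> = (\<Sum>c\<in>B. x c * (\<Sum>\<kappa>\<in>?I D (B - {c}). \<Prod>u\<in>D. x (\<kappa> u)))"
  proof -
    have "finite (?I D (B - {c}))" for c
      by (rule finite_subset[OF _ finite_PiE[of D "\<lambda>_. B - {c}"]]) (use assms in auto)
    then have "(\<Sum>(c, \<kappa>)\<in>Sigma B (\<lambda>c. ?I D (B - {c})). x c * (\<Prod>u\<in>D. x (\<kappa> u)))
        = (\<Sum>c\<in>B. \<Sum>\<kappa>\<in>?I D (B - {c}). x c * (\<Prod>u\<in>D. x (\<kappa> u)))"
      using assms(3) by (intro sum.Sigma[symmetric]) auto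
    then show ?thesis
      by (simp add: sum_distrib_left)
  qed
  finally show ?thesis .
qed

lemma sum_injections_prod:
  assumes "finite D" and "finite B"
  shows "(\<Sum>\<kappa>\<in>{\<kappa> \<in> D \<rightarrow>\<^sub>E B. inj_on \<kappa> D}. \<Prod>u\<in>D. x (\<kappa> u)) = fact (card D) * esym_on x (card D) B"
  using assms
proof (induction D arbitrary: B rule: finite_induct)
  case empty
  have "{\<kappa> \<in> {} \<rightarrow>\<^sub>E B. inj_on \<kappa> {}} = {\<lambda>_. undefined}"
    by auto
  then show ?case
    using esym_on_0[OF empty.prems] by simp
next
  case (insert a D)
  have "(\<Sum>\<kappa>\<in>{\<kappa> \<in> insert a D \<rightarrow>\<^sub>E B. inj_on \<kappa> (insert a D)}. \<Prod>u\<in>insert a D. x (\<kappa> u))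
      = (\<Sum>c\<in>B. x c * (\<Sum>\<kappa>\<in>{\<kappa> \<in> D \<rightarrow>\<^sub>E B - {c}. inj_on \<kappa> D}. \<Prod>u\<in>D. x (\<kappa> u)))"
    by (rule sum_injections_insert[OF insert.hyps(2,1) insert.prems])
  also have "\<dots> = fact (card D) * (\<Sum>c\<in>B. x c * esym_on x (card D) (B - {c}))"
    using insert.IH insert.prems by (simp add: sum_distrib_left mult_ac)
  also have "\<dots> = fact (card (insert a D)) * esym_on x (card (insert a D)) B"
    using sum_mult_esym_on_remove[OF insert.prems] insert.hyps by simp
  finally show ?case .
qed

abbreviation esym_without :: "nat \<Rightarrow> (nat \<Rightarrow> real) \<Rightarrow> nat \<Rightarrow> nat \<Rightarrow> real" where
  "esym_without n x j d \<equiv> esym_on x j ({..<n} - {d})"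

lemma esym_without_Suc:
  "d < n \<Longrightarrow> esym_without n x (Suc j) d = esym n (Suc j) x - x d * esym_without n x j d"
  using esym_on_remove[of "{..<n}" d x j] by (simp add: esym_eq_esym_on)

(* A proper colouring of a clique is an injection; fixing the colour d of v leaves the injections
   of Q - {v} into the other colours. *)
lemma rooted_csf_clique:
  assumes fin: "finite Q" and vQ: "v \<in> Q" and dn: "d < n"
  shows "rooted_csf (Q, {{a, b} | a b. a \<in> Q \<and> b \<in> Q \<and> a \<noteq> b}) v n x d
       = fact (card Q - 1) * esym_without n x (card Q - 1) d"
proof -
  let ?E = "{{a, b} | a b. a \<in> Q \<and> b \<in> Q \<and> a \<noteq> b}"
  have proper: "proper_coloring (Q, ?E) \<kappa> \<longleftrightarrow> inj_on \<kappa> Q" for \<kappa>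
    unfolding proper_coloring_def inj_on_def by auto
  have "rooted_csf (Q, ?E) v n x d
      = (\<Sum>\<kappa>\<in>{\<kappa> \<in> Q - {v} \<rightarrow>\<^sub>E {..<n} - {d}. inj_on \<kappa> (Q - {v})}. \<Prod>u\<in>Q - {v}. x (\<kappa> u))"
    unfolding rooted_csf_def fst_conv proper
  proof (rule sum.reindex_bij_witness[where j = "\<lambda>\<kappa>. restrict \<kappa> (Q - {v})" and i = "\<lambda>\<kappa>. \<kappa>(v := d)"])
    fix \<kappa> assume \<kappa>: "\<kappa> \<in> {\<kappa> \<in> Q \<rightarrow>\<^sub>E {..<n}. inj_on \<kappa> Q \<and> \<kappa> v = d}"
    show "(restrict \<kappa> (Q - {v}))(v := d) = \<kappa>"
      using \<kappa> by (auto simp: PiE_def extensional_def fun_eq_iff)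
    show "restrict \<kappa> (Q - {v}) \<in> {\<kappa> \<in> Q - {v} \<rightarrow>\<^sub>E {..<n} - {d}. inj_on \<kappa> (Q - {v})}"
      using \<kappa> vQ by (auto simp: PiE_def extensional_def inj_on_def)
    show "(\<Prod>u\<in>Q - {v}. x (restrict \<kappa> (Q - {v}) u)) = (\<Prod>u\<in>Q - {v}. x (\<kappa> u))"
      by (rule prod.cong) auto
  next
    fix \<kappa> assume \<kappa>: "\<kappa> \<in> {\<kappa> \<in> Q - {v} \<rightarrow>\<^sub>E {..<n} - {d}. inj_on \<kappa> (Q - {v})}"
    show "restrict (\<kappa>(v := d)) (Q - {v}) = \<kappa>"
      using \<kappa> by (auto simp: PiE_def extensional_def fun_eq_iff)
    show "\<kappa>(v := d) \<in> {\<kappa> \<in> Q \<rightarrow>\<^sub>E {..<n}. inj_on \<kappa> Q \<and> \<kappa> v = d}"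
      using \<kappa> vQ dn by (auto simp: PiE_def extensional_def inj_on_def)
  qed
  also have "\<dots> = fact (card Q - 1) * esym_without n x (card Q - 1) d"
    using sum_injections_prod[of "Q - {v}" "{..<n} - {d}" x] fin vQ by simp
  finally show ?thesis .
qed

section \<open>Pendant paths, lollipops and the spider\<close>

lemma simple_graph_complete: "simple_graph (complete s)"
  unfolding simple_graph_def complete_def by auto

lemma rooted_csf_complete:
  assumes "1 \<le> s" and "d < n"
  shows "rooted_csf (complete s) 0 n x d = fact (s - 1) * esym_without n x (s - 1) d"
proof -
  have "complete s = ({..<s}, {{a, b} | a b. a \<in> {..<s} \<and> b \<in> {..<s} \<and> a \<noteq> b})"
    unfolding complete_def by simp
  then show ?thesis
    using rooted_csf_clique[of "{..<s}" 0 d n x] assms by simp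
qed

lemma csf_pend:
  assumes sg: "simple_graph G" and rV: "r \<in> fst G"
  shows "csf (pend G r t) n x = wdot n x (\<lambda>_. 1) ((leaf_step n x ^^ t) (rooted_csf G r n x))"
proof -
  obtain V E where G: "G = (V, E)"
    by fastforce
  have finV: "finite V" and EV: "\<forall>e\<in>E. e \<subseteq> V" and rV: "r \<in> V"
    using sg rV by (auto simp: G simple_graph_def)
  have "pvert r ` {1..t} = Inr ` {1..t}"
    by (auto simp: pvert_def)
  then have pend: "pend G r t = (Inl ` V \<union> pvert r ` {1..t}, image Inl ` E \<union> path_edges (pvert r) t)"
    by (simp add: pend_def path_edges_def G)
  have "rooted_csf (pend G r t) (pvert r t) n x d = (leaf_step n x ^^ t) (rooted_csf G r n x) d"
    if "d < n" for d
  proof -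
    have "inj_on (pvert r) {0..t}" and "pvert r ` {1..t} \<inter> Inl ` V = {}"
      by (auto simp: inj_on_def pvert_def)
    moreover have "\<forall>e\<in>image Inl ` E. e \<subseteq> Inl ` V"
      using EV by blast
    ultimately have "rooted_csf (pend G r t) (pvert r t) n x d
        = (leaf_step n x ^^ t) (rooted_csf (Inl ` V, image Inl ` E) (Inl r :: _ + nat) n x) d"
      unfolding pend using finV rV that
      by (subst rooted_csf_attach_path) (auto simp: pvert_def)
    also have "\<dots> = (leaf_step n x ^^ t) (rooted_csf G r n x) d"
      using rooted_csf_image[of Inl V E r] EV rV that by (intro leaf_step_pow_cong) (simp_all add: G)
    finally show ?thesis .
  qed
  moreover have "finite (fst (pend G r t))"
    using finV by (simp add: pend)
  moreover have "pvert r t \<in> fst (pend G r t)"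
    unfolding pend using rV by (cases "t = 0") (auto simp: pvert_def)
  ultimately show ?thesis
    by (intro csf_eq_wdot_rooted_csf)
qed

lemma csf_lollipop_eq_wdot:
  assumes "1 \<le> z"
  shows "csf (lollipop z t) n x = wdot n x (\<lambda>_. 1) ((leaf_step n x ^^ t) (rooted_csf (complete z) 0 n x))"
  unfolding lollipop_def using assms by (intro csf_pend simple_graph_complete) (simp add: complete_def)

lemma csf_lollipop:
  assumes "1 \<le> z"
  shows "csf (lollipop z t) n x
    = fact (z - 1) * wdot n x (\<lambda>_. 1) ((leaf_step n x ^^ t) (esym_without n x (z - 1)))"
proof -
  have "csf (lollipop z t) n x
      = wdot n x (\<lambda>_. 1) ((leaf_step n x ^^ t) (\<lambda>d. fact (z - 1) * esym_without n x (z - 1) d))"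
    unfolding csf_lollipop_eq_wdot[OF assms] using rooted_csf_complete[OF assms]
    by (intro wdot_cong leaf_step_pow_cong)
  then show ?thesis
    by (simp add: leaf_step_pow_scale wdot_scale)
qed

definition spider_G_arm :: "'a graph \<Rightarrow> 'a \<Rightarrow> nat \<Rightarrow> nat \<Rightarrow> ('a + (nat + nat \<times> nat)) graph" where
  "spider_G_arm G r g k = (Inl ` fst G \<union> s_A r g k ` {0..g}, image Inl ` snd G \<union> path_edges (s_A r g k) g)"

definition spider_leg :: "'a \<Rightarrow> nat \<Rightarrow> nat \<Rightarrow> nat \<Rightarrow> ('a + (nat + nat \<times> nat)) graph" where
  "spider_leg r g k h = (s_C r g k ` {0..h}, path_edges (s_C r g k) h)"

definition spider_K_arm :: "'a \<Rightarrow> nat \<Rightarrow> nat \<Rightarrow> nat \<Rightarrow> ('a + (nat + nat \<times> nat)) graph" where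
  "spider_K_arm r g k m = (s_K r g k ` {..<m} \<union> s_B r g k ` {0..k},
     image (image (s_K r g k)) (snd (complete m)) \<union> path_edges (s_B r g k) k)"

lemma spider_eq_union:
  "spider G r h g k m =
    (fst (spider_G_arm G r g k) \<union> (fst (spider_leg r g k h) \<union> fst (spider_K_arm r g k m)),
     snd (spider_G_arm G r g k) \<union> (snd (spider_leg r g k h) \<union> snd (spider_K_arm r g k m)))"
proof -
  have "{{s_K r g k i, s_K r g k j} | i j. i < m \<and> j < m \<and> i \<noteq> j} = image (image (s_K r g k)) (snd (complete m))"
    unfolding complete_def by (auto simp: image_def)
  then show ?thesis
    unfolding spider_def spider_G_arm_def spider_leg_def spider_K_arm_def path_edges_def by auto
qed

lemma spider_arms_meet_at_centre:
  "fst (spider_G_arm G r g k) \<inter> (fst (spider_leg r g k h) \<union> fst (spider_K_arm r g k m)) \<subseteq> {s_cen r g k}"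
  "fst (spider_leg r g k h) \<inter> fst (spider_K_arm r g k m) \<subseteq> {s_cen r g k}"
  unfolding spider_G_arm_def spider_leg_def spider_K_arm_def
  by (auto simp: s_A_def s_B_def s_C_def s_K_def s_cen_def split: if_splits)

lemma rooted_csf_spider_G_arm:
  assumes sg: "simple_graph G" and rV: "r \<in> fst G" and dn: "d < n"
  shows "rooted_csf (spider_G_arm G r g k) (s_cen r g k) n x d = (leaf_step n x ^^ g) (rooted_csf G r n x) d"
proof -
  have "inj_on (s_A r g k) {0..g}" and "s_A r g k ` {0..<g} \<inter> Inl ` fst G = {}"
    by (auto simp: inj_on_def s_A_def s_cen_def split: if_splits)
  moreover have "\<forall>e\<in>image Inl ` snd G. e \<subseteq> Inl ` fst G" and "finite (Inl ` fst G)"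
    using sg by (auto simp: simple_graph_def)
  ultimately have "rooted_csf (spider_G_arm G r g k) (s_A r g k 0) n x d
      = (leaf_step n x ^^ g) (rooted_csf (Inl ` fst G, image Inl ` snd G) (s_A r g k g) n x) d"
    unfolding spider_G_arm_def using rV dn
    by (intro rooted_csf_attach_path_rev) (auto simp: s_A_def s_cen_def)
  also have "\<dots> = (leaf_step n x ^^ g) (rooted_csf G r n x) d"
    using sg rV dn rooted_csf_image[of Inl "fst G" "snd G" r]
    by (intro leaf_step_pow_cong) (auto simp: simple_graph_def s_A_def s_cen_def)
  finally show ?thesis
    by (simp add: s_A_def)
qed

lemma rooted_csf_spider_leg:
  assumes "d < n"
  shows "rooted_csf (spider_leg r g k h) (s_cen r g k) n x d = (leaf_step n x ^^ h) (\<lambda>_. 1) d"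
proof -
  have "inj_on (s_C r g k) {0..h}" and "s_C r g k ` {0..<h} \<inter> {s_C r g k h} = {}"
    by (auto simp: inj_on_def s_C_def s_cen_def split: if_splits)
  then have "rooted_csf ({s_C r g k h} \<union> s_C r g k ` {0..h}, {} \<union> path_edges (s_C r g k) h) (s_C r g k 0) n x d
      = (leaf_step n x ^^ h) (rooted_csf ({s_C r g k h}, {}) (s_C r g k h) n x) d"
    using assms by (intro rooted_csf_attach_path_rev) auto
  also have "\<dots> = (leaf_step n x ^^ h) (\<lambda>_. 1) d"
    using assms by (intro leaf_step_pow_cong rooted_csf_singleton)
  moreover have "({s_C r g k h} \<union> s_C r g k ` {0..h}, {} \<union> path_edges (s_C r g k) h) = spider_leg r g k h"
    by (auto simp: spider_leg_def)
  moreover have "s_C r g k 0 = s_cen r g k"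
    by (simp add: s_C_def)
  ultimately show ?thesis
    by simp
qed

lemma rooted_csf_spider_K_arm:
  assumes m: "1 \<le> m" and dn: "d < n"
  shows "rooted_csf (spider_K_arm r g k m) (s_cen r g k) n x d = (leaf_step n x ^^ k) (rooted_csf (complete m) 0 n x) d"
proof -
  have inj: "inj_on (s_K r g k) {..<m}"
    by (auto simp: inj_on_def s_K_def s_B_def s_cen_def split: if_splits)
  have "inj_on (s_B r g k) {0..k}" and "s_B r g k ` {0..<k} \<inter> s_K r g k ` {..<m} = {}"
    by (auto simp: inj_on_def s_K_def s_B_def s_cen_def split: if_splits)
  moreover have "s_B r g k k \<in> s_K r g k ` {..<m}"
    using m by (auto simp: s_K_def image_iff intro!: bexI[of _ 0])
  moreover have "\<forall>e\<in>image (image (s_K r g k)) (snd (complete m)). e \<subseteq> s_K r g k ` {..<m}"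
    by (auto simp: complete_def)
  ultimately have "rooted_csf (spider_K_arm r g k m) (s_B r g k 0) n x d
      = (leaf_step n x ^^ k) (rooted_csf (s_K r g k ` {..<m}, image (image (s_K r g k)) (snd (complete m))) (s_B r g k k) n x) d"
    unfolding spider_K_arm_def using dn by (intro rooted_csf_attach_path_rev) auto
  also have "\<dots> = (leaf_step n x ^^ k) (rooted_csf (complete m) 0 n x) d"
  proof (intro leaf_step_pow_cong dn)
    fix c
    have "rooted_csf (s_K r g k ` {..<m}, image (image (s_K r g k)) (snd (complete m))) (s_K r g k 0) n x c
        = rooted_csf ({..<m}, snd (complete m)) 0 n x c"
      using inj m by (intro rooted_csf_image) (auto simp: complete_def)
    then show "rooted_csf (s_K r g k ` {..<m}, image (image (s_K r g k)) (snd (complete m))) (s_B r g k k) n x c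
        = rooted_csf (complete m) 0 n x c"
      by (simp add: s_K_def complete_def)
  qed
  finally show ?thesis
    by (simp add: s_B_def)
qed

lemma s_cen_in_spider_parts:
  "s_cen r g k \<in> fst (spider_G_arm G r g k)" "s_cen r g k \<in> fst (spider_leg r g k h)"
  "s_cen r g k \<in> fst (spider_K_arm r g k m)"
proof -
  have "s_A r g k 0 \<in> s_A r g k ` {0..g}" "s_C r g k 0 \<in> s_C r g k ` {0..h}" "s_B r g k 0 \<in> s_B r g k ` {0..k}"
    by auto
  moreover have "s_A r g k 0 = s_cen r g k" "s_C r g k 0 = s_cen r g k" "s_B r g k 0 = s_cen r g k"
    by (simp_all add: s_A_def s_B_def s_C_def)
  ultimately show "s_cen r g k \<in> fst (spider_G_arm G r g k)" "s_cen r g k \<in> fst (spider_leg r g k h)"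
    "s_cen r g k \<in> fst (spider_K_arm r g k m)"
    unfolding spider_G_arm_def spider_leg_def spider_K_arm_def by simp_all
qed

lemma spider_parts_edges:
  assumes "simple_graph G"
  shows "\<forall>e\<in>snd (spider_G_arm G r g k). e \<subseteq> fst (spider_G_arm G r g k)"
    and "\<forall>e\<in>snd (spider_leg r g k h). e \<subseteq> fst (spider_leg r g k h)"
    and "\<forall>e\<in>snd (spider_K_arm r g k m). e \<subseteq> fst (spider_K_arm r g k m)"
proof -
  show "\<forall>e\<in>snd (spider_G_arm G r g k). e \<subseteq> fst (spider_G_arm G r g k)"
    unfolding spider_G_arm_def fst_conv snd_conv
  proof
    fix e assume "e \<in> image Inl ` snd G \<union> path_edges (s_A r g k) g"
    then show "e \<subseteq> Inl ` fst G \<union> s_A r g k ` {0..g}"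
      using assms path_edges_subset[of e "s_A r g k" g] unfolding simple_graph_def by blast
  qed
  show "\<forall>e\<in>snd (spider_leg r g k h). e \<subseteq> fst (spider_leg r g k h)"
    unfolding spider_leg_def by (simp add: path_edges_subset)
  show "\<forall>e\<in>snd (spider_K_arm r g k m). e \<subseteq> fst (spider_K_arm r g k m)"
    unfolding spider_K_arm_def fst_conv snd_conv
  proof
    fix e assume "e \<in> image (image (s_K r g k)) (snd (complete m)) \<union> path_edges (s_B r g k) k"
    then show "e \<subseteq> s_K r g k ` {..<m} \<union> s_B r g k ` {0..k}"
      using path_edges_subset[of e "s_B r g k" k] unfolding complete_def by auto
  qed
qed

lemma rooted_csf_spider:
  assumes sg: "simple_graph G" and rV: "r \<in> fst G" and m: "1 \<le> m" and dn: "d < n"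
  shows "rooted_csf (spider G r h g k m) (s_cen r g k) n x d =
    (leaf_step n x ^^ g) (rooted_csf G r n x) d
      * ((leaf_step n x ^^ h) (\<lambda>_. 1) d * (leaf_step n x ^^ k) (rooted_csf (complete m) 0 n x) d)"
proof -
  let ?A = "spider_G_arm G r g k" and ?L = "spider_leg r g k h" and ?K = "spider_K_arm r g k m"
  let ?c = "s_cen r g k"
  have centre: "?c \<in> fst ?A" "?c \<in> fst ?L" "?c \<in> fst ?K"
    by (rule s_cen_in_spider_parts)+
  have cut_A: "fst ?A \<inter> (fst ?L \<union> fst ?K) = {?c}"
    using spider_arms_meet_at_centre(1)[of G r g k h m] centre by blast
  have cut_L: "fst ?L \<inter> fst ?K = {?c}"
    using spider_arms_meet_at_centre(2)[of r g k h m] centre by blast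
  have fin: "finite (fst ?A)" "finite (fst ?L)" "finite (fst ?K)"
    using sg by (auto simp: spider_G_arm_def spider_leg_def spider_K_arm_def simple_graph_def)
  have edges: "\<forall>e\<in>snd ?A. e \<subseteq> fst ?A" "\<forall>e\<in>snd ?L. e \<subseteq> fst ?L" "\<forall>e\<in>snd ?K. e \<subseteq> fst ?K"
    by (rule spider_parts_edges[OF sg])+
  have "rooted_csf (spider G r h g k m) ?c n x d
      = rooted_csf ?A ?c n x d * rooted_csf (fst ?L \<union> fst ?K, snd ?L \<union> snd ?K) ?c n x d"
    unfolding spider_eq_union using cut_A fin edges by (subst rooted_csf_glue) auto
  also have "rooted_csf (fst ?L \<union> fst ?K, snd ?L \<union> snd ?K) ?c n x d
      = rooted_csf ?L ?c n x d * rooted_csf ?K ?c n x d"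
    using cut_L fin edges by (subst rooted_csf_glue) auto
  finally show ?thesis
    by (simp only: rooted_csf_spider_G_arm[OF sg rV dn] rooted_csf_spider_leg[OF dn]
        rooted_csf_spider_K_arm[OF m dn])
qed

lemma csf_spider:
  assumes sg: "simple_graph G" and rV: "r \<in> fst G" and m: "1 \<le> m"
  shows "csf (spider G r h g k m) n x =
    wdot n x ((leaf_step n x ^^ g) (rooted_csf G r n x))
      (\<lambda>d. (leaf_step n x ^^ h) (\<lambda>_. 1) d * (leaf_step n x ^^ k) (rooted_csf (complete m) 0 n x) d)"
proof -
  have "finite (fst (spider G r h g k m))" and "s_cen r g k \<in> fst (spider G r h g k m)"
    using sg s_cen_in_spider_parts(1)[where G = G and r = r and g = g and k = k]
    by (auto simp: spider_eq_union spider_G_arm_def spider_leg_def spider_K_arm_def simple_graph_def)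
  then have "csf (spider G r h g k m) n x = wdot n x (\<lambda>_. 1) (\<lambda>d.
      (leaf_step n x ^^ g) (rooted_csf G r n x) d * ((leaf_step n x ^^ h) (\<lambda>_. 1) d
        * (leaf_step n x ^^ k) (rooted_csf (complete m) 0 n x) d))"
    using rooted_csf_spider[OF sg rV m] by (rule csf_eq_wdot_rooted_csf)
  then show ?thesis
    by (simp only: wdot_one_mult)
qed

section \<open>Expanding the spider\<close>

lemma wdot_mult_leaf_step_pow:
  "wdot n x ((leaf_step n x ^^ g) w) (\<lambda>d. (leaf_step n x ^^ h) (\<lambda>_. 1) d * (leaf_step n x ^^ k) v d)
   = wdot n x ((leaf_step n x ^^ (g + k)) w) (\<lambda>d. (leaf_step n x ^^ h) (\<lambda>_. 1) d * v d)
     + (\<Sum>z<k. wdot n x (\<lambda>_. 1) ((leaf_step n x ^^ z) v) * wdot n x (\<lambda>_. 1) ((leaf_step n x ^^ (g + h + k - z - 1)) w)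
             - wdot n x (\<lambda>_. 1) ((leaf_step n x ^^ (h + z)) v) * wdot n x (\<lambda>_. 1) ((leaf_step n x ^^ (g + k - z - 1)) w))"
proof -
  let ?T = "leaf_step n x"
  have rec: "(?T ^^ Suc j) v d = wdot n x (\<lambda>_. 1) ((?T ^^ j) v) - x d * (?T ^^ j) v d" for j d
    by (simp add: leaf_step_def)
  have comp: "(?T ^^ i) ((?T ^^ g) w) = (?T ^^ (g + i)) w" for i
    by (metis add.commute comp_apply funpow_add)
  have "wdot n x ((?T ^^ (g + (k - 1 - z))) w) ((?T ^^ h) (\<lambda>_. 1))
      = wdot n x (\<lambda>_. 1) ((?T ^^ (g + h + k - z - 1)) w)"
    and "wdot n x ((?T ^^ (g + (k - 1 - z))) w) (\<lambda>_. 1) = wdot n x (\<lambda>_. 1) ((?T ^^ (g + k - z - 1)) w)"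
    if "z < k" for z
    using that wdot_leaf_step_pow_one[of n x "g + (k - 1 - z)" w h]
    by (simp_all add: algebra_simps wdot_commute[of n x _ "\<lambda>_. 1"])
  moreover have "wdot n x ((?T ^^ h) (\<lambda>_. 1)) ((?T ^^ z) v) = wdot n x (\<lambda>_. 1) ((?T ^^ (h + z)) v)" for z
    using wdot_leaf_step_pow_one[of n x z v h] by (simp add: wdot_commute add.commute)
  ultimately show ?thesis
    using wdot_mult_recurrence[where f = "\<lambda>j. (?T ^^ j) v" and a = "\<lambda>j. wdot n x (\<lambda>_. 1) ((?T ^^ j) v)"
        and w = "(?T ^^ g) w" and u = "(?T ^^ h) (\<lambda>_. 1)" and j = k, OF rec]
    by (simp add: comp)
qed

lemma wdot_mult_esym_without:
  assumes "1 \<le> m"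
  shows "wdot n x ((leaf_step n x ^^ a) w) (\<lambda>d. (leaf_step n x ^^ h) (\<lambda>_. 1) d * esym_without n x (m - 1) d)
   = (\<Sum>z = 0..m - 1. esym n z x * wdot n x (\<lambda>_. 1) ((leaf_step n x ^^ (a + h + m - z - 1)) w))
     - (\<Sum>z = 1..m - 1. wdot n x (\<lambda>_. 1) ((leaf_step n x ^^ h) (esym_without n x (z - 1)))
                        * wdot n x (\<lambda>_. 1) ((leaf_step n x ^^ (a + m - z - 1)) w))"
proof -
  let ?T = "leaf_step n x" and ?U = "(leaf_step n x ^^ h) (\<lambda>_. 1)"
  obtain j where m: "m = Suc j"
    using assms by (cases m) auto
  have comp: "(?T ^^ i) ((?T ^^ a) w) = (?T ^^ (a + i)) w" for i
    by (metis add.commute comp_apply funpow_add)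
  have "wdot n x ((?T ^^ a) w) (\<lambda>d. ?U d * esym_without n x j d)
      = wdot n x ((?T ^^ (a + j)) w) (\<lambda>d. ?U d * esym_without n x 0 d)
        + (\<Sum>z<j. esym n (Suc z) x * wdot n x ((?T ^^ (a + (j - 1 - z))) w) ?U
                 - wdot n x ?U (esym_without n x z) * wdot n x ((?T ^^ (a + (j - 1 - z))) w) (\<lambda>_. 1))"
    using wdot_mult_recurrence[where f = "esym_without n x" and a = "\<lambda>j. esym n (Suc j) x"
        and w = "(?T ^^ a) w" and u = ?U and j = j, OF esym_without_Suc]
    by (simp add: comp)
  also have "wdot n x ((?T ^^ (a + j)) w) (\<lambda>d. ?U d * esym_without n x 0 d)
      = esym n 0 x * wdot n x (\<lambda>_. 1) ((?T ^^ (a + h + m - 0 - 1)) w)"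
    using wdot_leaf_step_pow_one[of n x "a + j" w h]
    by (simp add: esym_on_0 esym_eq_esym_on m algebra_simps)
  also have "(\<Sum>z<j. esym n (Suc z) x * wdot n x ((?T ^^ (a + (j - 1 - z))) w) ?U
                 - wdot n x ?U (esym_without n x z) * wdot n x ((?T ^^ (a + (j - 1 - z))) w) (\<lambda>_. 1))
      = (\<Sum>z<j. esym n (Suc z) x * wdot n x (\<lambda>_. 1) ((?T ^^ (a + h + m - Suc z - 1)) w))
        - (\<Sum>z<j. wdot n x (\<lambda>_. 1) ((?T ^^ h) (esym_without n x (Suc z - 1)))
                   * wdot n x (\<lambda>_. 1) ((?T ^^ (a + m - Suc z - 1)) w))"
  proof -
    have "wdot n x ((?T ^^ (a + (j - 1 - z))) w) ?U = wdot n x (\<lambda>_. 1) ((?T ^^ (a + h + m - Suc z - 1)) w)"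
      and "wdot n x ((?T ^^ (a + (j - 1 - z))) w) (\<lambda>_. 1) = wdot n x (\<lambda>_. 1) ((?T ^^ (a + m - Suc z - 1)) w)"
      if "z < j" for z
      using that wdot_leaf_step_pow_one[of n x "a + (j - 1 - z)" w h]
      by (simp_all add: m algebra_simps wdot_commute[of n x _ "\<lambda>_. 1"])
    moreover have "wdot n x ?U (esym_without n x z) = wdot n x (\<lambda>_. 1) ((?T ^^ h) (esym_without n x z))" for z
      using wdot_leaf_step_pow_one[of n x 0 "esym_without n x z" h] by (simp add: wdot_commute)
    ultimately show ?thesis
      by (simp add: sum_subtractf)
  qed
  finally show ?thesis
    by (simp add: m atLeast0AtMost sum.atMost_shift sum.atLeast1_atMost_eq)
qed

theorem corollary4p6:
  fixes G :: "'a graph" and r :: 'a and g k m h n :: nat and x :: "nat \<Rightarrow> real"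
  assumes "simple_graph G" and "r \<in> fst G" and "m \<ge> 1" and "h \<ge> 1"
  shows "csf (spider G r h g k m) n x =
    fact (m - 1) *
      ((\<Sum>z = 0..m - 1. esym n z x * csf (pend G r (g + h + k + m - z - 1)) n x)
       - (\<Sum>z = 1..m - 1. csf (lollipop z h) n x / fact (z - 1) * csf (pend G r (g + k + m - z - 1)) n x))
    + (\<Sum>z = 0..<k. csf (lollipop m z) n x * csf (pend G r (g + h + k - z - 1)) n x
                    - csf (lollipop m (h + z)) n x * csf (pend G r (g + k - z - 1)) n x)"
proof -
  let ?T = "leaf_step n x" and ?w = "rooted_csf G r n x" and ?\<kappa> = "rooted_csf (complete m) 0 n x"
  have pend: "csf (pend G r t) n x = wdot n x (\<lambda>_. 1) ((?T ^^ t) ?w)" for t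
    using assms(1,2) by (rule csf_pend)
  have lollipop_m: "csf (lollipop m t) n x = wdot n x (\<lambda>_. 1) ((?T ^^ t) ?\<kappa>)" for t
    using assms(3) by (rule csf_lollipop_eq_wdot)
  have clique: "wdot n x ((?T ^^ (g + k)) ?w) (\<lambda>d. (?T ^^ h) (\<lambda>_. 1) d * ?\<kappa> d)
      = fact (m - 1) * wdot n x ((?T ^^ (g + k)) ?w) (\<lambda>d. (?T ^^ h) (\<lambda>_. 1) d * esym_without n x (m - 1) d)"
    using rooted_csf_complete[OF assms(3)] by (simp add: wdot_scale[symmetric] mult_ac cong: wdot_cong)
  show ?thesis
    unfolding csf_spider[OF assms(1-3)] wdot_mult_leaf_step_pow clique wdot_mult_esym_without[OF assms(3)]
      pend lollipop_m
    by (simp add: csf_lollipop atLeast0LessThan add_ac)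
qed

end
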